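(* (1) Two distinct seeds $\phi,\psi$ are neighbors if and only if $parent(\psi)=\phi$ or $parent(\phi)=\psi$. (2) If $\phi=parent(\psi)$, then $perms(\phi)\cap perms(\psi)=cycle(\widetilde\psi)$, and there is $i\in\{1,\dots,n-3\}$ with $\psi=son(\phi,i)$ (i.e. $\sigma^i(\phi^{(i)})=\widetilde\psi$); if moreover $height(\phi)=k<n-3$ then $height(\psi)=\Delta(k,i)$. (3) For every seed $\phi$ with $height(\phi)>1$ and every $i\in\{1,\dots,n-3\}$ there exists a seed $\beta$ with $son(\phi,i)=\beta$.
   Context: Fix an integer $n\ge 5$. An $n$-permutation is a sequence $(a_1,\dots,a_n)$ of the distinct elements of $\{1,\dots,n\}$. For $\pi=(a_1,\dots,a_n)$ put $\sigma(\pi)=(a_2,\dots,a_n,a_1)$ and $\tau(\pi)=(a_2,a_1,a_3,\dots,a_n)$; $cycle(\pi)$ denotes the set of the $n$ cyclic rotations of $\pi$; $\sigma^i$ is $\sigma$ applied $i$ times. On $\{1,\dots,n-1\}$ let $a\oplus 1=a+1$ for $a<n-1$ and $(n-1)\oplus 1=1$; $a\ominus 1$ is the unique $b$ with $b\oplus 1=a$, and $a\oplus j$, $a\ominus j$ denote $j$-fold iterates. A seed is an $(n-1)$-tuple $\psi=(a_1,\dots,a_{n-1})$ of distinct elements of $\{1,\dots,n\}$ with $a_1=n$ and $a_2\oplus1\notin\{a_1,\dots,a_{n-1}\}$; its missing element is $mis(\psi)=a_2\oplus 1$. The package $perms(\psi)$ is the set of all $n$-permutations obtained from $\psi$ by inserting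 $mis(\psi)$ at any position and then applying any cyclic rotation. Seeds $\phi,\psi$ are neighbors if $perms(\phi)\cap perms(\psi)\neq\emptyset$. For a seed $\psi=(a_1,\dots,a_{n-1})$ with $x=mis(\psi)$: $height(\psi)$ is the largest $k\in\{1,\dots,n-2\}$ such that $a_i=a_{i+1}\oplus 1$ for all $2\le i\le k$; $\widetilde\psi=(a_1,x,a_2,\dots,a_{n-1})$; and for $1\le i\le n-1$, $\psi^{(i)}=(x,c_1,\dots,c_{n-1})$ where $(c_1,\dots,c_{n-1})$ is $\psi$ cyclically rotated to the right by $i-1$ positions (so $\psi^{(1)}=(x,a_1,\dots,a_{n-1})$ and $\psi^{(n-1)}=(x,a_2,\dots,a_{n-1},a_1)$). For distinct neighboring seeds $\beta,\psi$ we write $parent(\beta)=\psi$ if $height(\psi)>1$ and $mis(\psi)=mis(\beta)\oplus 1$; if moreover $\sigma^i(\psi^{(i)})=\widetilde\beta$ we write $son(\psi,i)=\beta$ ($\beta$ is the $i$-th son of $\psi$). $\Delta(k,i)=\min(k-1,n-2-i)$. *)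

theory Defs
  imports Main
begin

text \<open>Lists of naturals represent tuples; index 1-based positions a_i as xs ! (i-1).
  sigma is rotate1, sigma^i is rotate i.\<close>

definition oplus :: "nat \<Rightarrow> nat \<Rightarrow> nat" where
  "oplus n a = (if a < n - 1 then a + 1 else 1)"

definition is_perm :: "nat \<Rightarrow> nat list \<Rightarrow> bool" where
  "is_perm n p \<longleftrightarrow> length p = n \<and> distinct p \<and> set p = {1..n}"

definition cycle :: "nat list \<Rightarrow> nat list set" where
  "cycle p = {rotate j p | j. j < length p}"

definition seed :: "nat \<Rightarrow> nat list \<Rightarrow> bool" where
  "seed n \<psi> \<longleftrightarrow> length \<psi> = n - 1 \<and> distinct \<psi> \<and> set \<psi> \<subseteq> {1..n}
      \<and> \<psi> ! 0 = n \<and> oplus n (\<psi> ! 1) \<notin> set \<psi>"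

definition mis :: "nat \<Rightarrow> nat list \<Rightarrow> nat" where
  "mis n \<psi> = oplus n (\<psi> ! 1)"

definition perms :: "nat \<Rightarrow> nat list \<Rightarrow> nat list set" where
  "perms n \<psi> = {rotate j (take p \<psi> @ mis n \<psi> # drop p \<psi>) | j p. j < n \<and> p \<le> length \<psi>}"

definition neighbors :: "nat \<Rightarrow> nat list \<Rightarrow> nat list \<Rightarrow> bool" where
  "neighbors n \<phi> \<psi> \<longleftrightarrow> seed n \<phi> \<and> seed n \<psi> \<and> perms n \<phi> \<inter> perms n \<psi> \<noteq> {}"

definition height :: "nat \<Rightarrow> nat list \<Rightarrow> nat" where
  "height n \<psi> = (GREATEST k. k \<in> {1..n-2} \<and>
      (\<forall>i. 2 \<le> i \<and> i \<le> k \<longrightarrow> \<psi> ! (i - 1) = oplus n (\<psi> ! i)))"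

definition tilde :: "nat \<Rightarrow> nat list \<Rightarrow> nat list" where
  "tilde n \<psi> = hd \<psi> # mis n \<psi> # tl \<psi>"

text \<open>psi^(i): mis followed by psi rotated to the right by i-1 positions
  (= rotated left by length - (i-1), for 1 <= i <= n-1).\<close>
definition supi :: "nat \<Rightarrow> nat list \<Rightarrow> nat \<Rightarrow> nat list" where
  "supi n \<psi> i = mis n \<psi> # rotate (length \<psi> - (i - 1)) \<psi>"

text \<open>is_parent n psi beta means parent(beta) = psi.\<close>
definition is_parent :: "nat \<Rightarrow> nat list \<Rightarrow> nat list \<Rightarrow> bool" where
  "is_parent n \<psi> \<beta> \<longleftrightarrow> \<psi> \<noteq> \<beta> \<and> neighbors n \<beta> \<psi> \<and> height n \<psi> > 1
      \<and> mis n \<psi> = oplus n (mis n \<beta>)"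

definition is_son :: "nat \<Rightarrow> nat list \<Rightarrow> nat \<Rightarrow> nat list \<Rightarrow> bool" where
  "is_son n \<psi> i \<beta> \<longleftrightarrow> is_parent n \<psi> \<beta> \<and> rotate i (supi n \<psi> i) = tilde n \<beta>"

definition Delta :: "nat \<Rightarrow> nat \<Rightarrow> nat \<Rightarrow> nat" where
  "Delta n k i = min (k - 1) (n - 2 - i)"

end

theory Submission
  imports Defs
begin

text \<open>Every permutation in a package is a rotation of an arrangement \<open>insert_at p (mis \<psi>) \<psi>\<close>
  with \<open>1 \<le> p\<close>, and since all these arrangements start with \<open>n\<close>, two packages meet exactly when
  two seeds have a common arrangement. Comparing entries 1 and 2 of a common arrangement of
  seeds with different missing elements shows that one of them, \<open>\<beta>\<close>, must be inserted right
  after \<open>n\<close> (giving \<open>tilde \<beta>\<close>) and the other, \<open>\<psi>\<close>, at some position \<open>p \<ge> 3\<close>; then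
  \<open>\<psi> ! 1 = mis \<beta>\<close> and \<open>\<psi> ! 2 = \<beta> ! 1\<close>, which is precisely \<open>parent \<beta> = \<psi>\<close>. Reading \<open>\<beta>\<close> off
  \<open>insert_at p (mis \<psi>) \<psi>\<close> shifts the descending run of \<open>\<psi>\<close> by one place and cuts it at the
  inserted element; the run cannot continue through \<open>mis \<psi>\<close>, because \<open>\<oplus>\<close> has order \<open>n - 1\<close>.\<close>

definition insert_at :: "nat \<Rightarrow> 'a \<Rightarrow> 'a list \<Rightarrow> 'a list" where
  "insert_at p a xs = take p xs @ a # drop p xs"

lemma nth_insert_at_less: "m < p \<Longrightarrow> p \<le> length xs \<Longrightarrow> insert_at p a xs ! m = xs ! m"
  unfolding insert_at_def by (simp add: nth_append)

lemma nth_insert_at_same: "p \<le> length xs \<Longrightarrow> insert_at p a xs ! p = a"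
  unfolding insert_at_def by (simp add: nth_append)

lemma length_insert_at: "length (insert_at p a xs) = Suc (length xs)"
  unfolding insert_at_def by simp

lemma set_insert_at: "set (insert_at p a xs) = insert a (set xs)"
  unfolding insert_at_def by (metis Un_insert_right append_take_drop_id list.simps(15) set_append)

lemma distinct_insert_at: "distinct xs \<Longrightarrow> a \<notin> set xs \<Longrightarrow> distinct (insert_at p a xs)"
  unfolding insert_at_def using set_take_disj_set_drop_if_distinct[of xs p p]
  by (auto dest: in_set_takeD in_set_dropD)

lemma removeAll_insert_at: "a \<notin> set xs \<Longrightarrow> removeAll a (insert_at p a xs) = xs"
  unfolding insert_at_def
  by (metis append_take_drop_id in_set_dropD in_set_takeD removeAll.simps(2) removeAll_append removeAll_id)

lemma insert_at_eq_insert_atD: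
  assumes "insert_at p a xs = insert_at q a ys" "a \<notin> set xs" "a \<notin> set ys"
  shows "xs = ys"
  using assms removeAll_insert_at by metis

lemma rotate_eq_rotate_same_head:
  assumes "distinct xs" "length xs = length ys" "xs \<noteq> []" "xs ! 0 = ys ! 0"
    and "rotate i xs = rotate j ys"
  shows "xs = ys"
proof -
  define m where "m = length xs"
  have "m > 0" using assms(3) unfolding m_def by simp
  have rotate_back: "rotate (m - i mod m + i) xs = xs"
  proof -
    have "(m - i mod m + i) mod m = (m - i mod m + i mod m) mod m" by (simp add: mod_add_right_eq)
    also have "\<dots> = 0" using \<open>m > 0\<close> by (simp add: less_imp_le)
    finally have k0: "(m - i mod m + i) mod m = 0" .
    have "rotate (m - i mod m + i) xs = rotate ((m - i mod m + i) mod m) xs"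
      unfolding m_def by (rule rotate_conv_mod)
    then show ?thesis by (simp only: k0 rotate0 id_apply)
  qed
  define t where "t = (m - i mod m + j) mod m"
  have "xs = rotate (m - i mod m + j) ys" using assms(5) rotate_back by (metis rotate_rotate)
  then have xs_rot: "xs = rotate t ys" using assms(2) unfolding t_def m_def by (metis rotate_conv_mod)
  have "t < m" using \<open>m > 0\<close> unfolding t_def by simp
  then have "ys ! t = ys ! 0" using xs_rot assms(2,4) \<open>m > 0\<close> unfolding m_def by (simp add: nth_rotate)
  moreover have "distinct ys" using assms(1) xs_rot by simp
  ultimately have "t = 0" using \<open>t < m\<close> \<open>m > 0\<close> assms(2) unfolding m_def by (metis nth_eq_iff_index_eq)
  then show ?thesis using xs_rot by simp
qed

lemma oplus_bounds: "n \<ge> 2 \<Longrightarrow> 1 \<le> oplus n a \<and> oplus n a \<le> n - 1"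
  unfolding oplus_def by auto

lemma funpow_oplus:
  assumes "n \<ge> 2" "1 \<le> a" "a \<le> n - 1"
  shows "(oplus n ^^ j) a = (a - 1 + j) mod (n - 1) + 1"
proof (induction j)
  case 0 then show ?case using assms by simp
next
  case (Suc j)
  define r where "r = (a - 1 + j) mod (n - 1)"
  have "r < n - 1" using assms unfolding r_def by simp
  have "(oplus n ^^ Suc j) a = oplus n (r + 1)" using Suc by (simp add: r_def)
  also have "\<dots> = (r + 1) mod (n - 1) + 1"
  proof -
    have "r + 1 < n - 1 \<or> r + 1 = n - 1" using \<open>r < n - 1\<close> by linarith
    then show ?thesis unfolding oplus_def by auto
  qed
  also have "(r + 1) mod (n - 1) = (a - 1 + Suc j) mod (n - 1)"
    unfolding r_def by (simp add: mod_Suc_eq)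
  finally show ?case .
qed

lemma funpow_oplus_neq:
  assumes "n \<ge> 2" "1 \<le> a" "a \<le> n - 1" "0 < j" "j < n - 1"
  shows "(oplus n ^^ j) a \<noteq> a"
proof
  assume "(oplus n ^^ j) a = a"
  then have fix_eq: "(a - 1 + j) mod (n - 1) = a - 1" using funpow_oplus assms by simp
  show False
  proof (cases "a - 1 + j < n - 1")
    case True then show ?thesis using fix_eq assms by simp
  next
    case False
    then have "(a - 1 + j) mod (n - 1) = a - 1 + j - (n - 1)"
      using assms by (simp add: le_mod_geq)
    then show ?thesis using fix_eq assms False by linarith
  qed
qed

lemma oplus_neq: "n \<ge> 3 \<Longrightarrow> 1 \<le> a \<Longrightarrow> a \<le> n - 1 \<Longrightarrow> oplus n a \<noteq> a"
  using funpow_oplus_neq[of n a 1] by simp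

lemma oplus_oplus_neq: "n \<ge> 4 \<Longrightarrow> 1 \<le> a \<Longrightarrow> a \<le> n - 1 \<Longrightarrow> oplus n (oplus n a) \<noteq> a"
  using funpow_oplus_neq[of n a 2] by (simp add: numeral_2_eq_2)

definition oplus_chain :: "nat \<Rightarrow> nat list \<Rightarrow> nat \<Rightarrow> bool" where
  "oplus_chain n l k \<longleftrightarrow> (\<forall>j. 1 \<le> j \<and> j < k \<longrightarrow> l ! j = oplus n (l ! Suc j))"

lemma height_def_chain: "height n l = (GREATEST k. k \<in> {1..n-2} \<and> oplus_chain n l k)"
proof -
  have "(\<forall>i. 2 \<le> i \<and> i \<le> k \<longrightarrow> l ! (i - 1) = oplus n (l ! i)) \<longleftrightarrow> oplus_chain n l k" for k
    unfolding oplus_chain_def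
  proof (intro iffI allI impI)
    fix j assume "\<forall>i. 2 \<le> i \<and> i \<le> k \<longrightarrow> l ! (i - 1) = oplus n (l ! i)" "1 \<le> j \<and> j < k"
    then show "l ! j = oplus n (l ! Suc j)" by (auto dest: spec[of _ "Suc j"])
  next
    fix i assume "\<forall>j. 1 \<le> j \<and> j < k \<longrightarrow> l ! j = oplus n (l ! Suc j)" "2 \<le> i \<and> i \<le> k"
    then show "l ! (i - 1) = oplus n (l ! i)" by (auto dest: spec[of _ "i - 1"])
  qed
  then show ?thesis unfolding height_def by simp
qed

lemma height_bounds:
  assumes "n \<ge> 3"
  shows "1 \<le> height n l" "height n l \<le> n - 2" "oplus_chain n l (height n l)"
    and "\<And>k. 1 \<le> k \<Longrightarrow> k \<le> n - 2 \<Longrightarrow> oplus_chain n l k \<Longrightarrow> k \<le> height n l"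
proof -
  let ?P = "\<lambda>k. k \<in> {1..n-2} \<and> oplus_chain n l k"
  have "?P 1" using assms unfolding oplus_chain_def by auto
  moreover have bound: "\<And>y. ?P y \<Longrightarrow> y \<le> n - 2" by auto
  ultimately have "?P (height n l)"
    unfolding height_def_chain by (rule GreatestI_nat)
  then show "1 \<le> height n l" "height n l \<le> n - 2" "oplus_chain n l (height n l)" by auto
  fix k assume "1 \<le> k" "k \<le> n - 2" "oplus_chain n l k"
  then show "k \<le> height n l"
    unfolding height_def_chain by (intro Greatest_le_nat[of ?P, OF _ bound]) auto
qed

lemma oplus_chain_Suc_iff:
  "1 \<le> k \<Longrightarrow> oplus_chain n l (Suc k) \<longleftrightarrow> oplus_chain n l k \<and> l ! k = oplus n (l ! Suc k)"
  unfolding oplus_chain_def using less_Suc_eq by auto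

lemma oplus_chain_mono: "oplus_chain n l k \<Longrightarrow> j \<le> k \<Longrightarrow> oplus_chain n l j"
  unfolding oplus_chain_def by simp

lemma height_maximal:
  assumes "n \<ge> 3" "height n l < n - 2"
  shows "l ! height n l \<noteq> oplus n (l ! Suc (height n l))"
proof
  assume "l ! height n l = oplus n (l ! Suc (height n l))"
  then have "oplus_chain n l (Suc (height n l))"
    using oplus_chain_Suc_iff height_bounds(1,3)[OF assms(1), of l] by blast
  then show False using height_bounds(4)[OF assms(1), where l=l, of "Suc (height n l)"] assms(2) by simp
qed

lemma height_eqI:
  assumes "n \<ge> 3" "1 \<le> k" "k \<le> n - 2" "oplus_chain n l k"
    and "k < n - 2 \<Longrightarrow> l ! k \<noteq> oplus n (l ! Suc k)"
  shows "height n l = k"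
proof -
  have "k \<le> height n l" using height_bounds(4)[OF assms(1-4)] .
  moreover have "\<not> k < height n l"
  proof
    assume "k < height n l"
    then have "oplus_chain n l (Suc k)"
      using oplus_chain_mono[OF height_bounds(3)[OF assms(1), of l]] by simp
    then have "l ! k = oplus n (l ! Suc k)" using assms(2) oplus_chain_Suc_iff by blast
    moreover have "k < n - 2" using \<open>k < height n l\<close> height_bounds(2)[OF assms(1), of l] by simp
    ultimately show False using assms(5) by simp
  qed
  ultimately show ?thesis by simp
qed

lemma height_gt_1_iff:
  assumes "n \<ge> 4"
  shows "height n l > 1 \<longleftrightarrow> l ! 1 = oplus n (l ! 2)"
proof
  assume "height n l > 1"
  then show "l ! 1 = oplus n (l ! 2)"
    using height_bounds(3)[of n l] assms unfolding oplus_chain_def by (simp add: numeral_2_eq_2)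
next
  assume "l ! 1 = oplus n (l ! 2)"
  then have "oplus_chain n l 2" unfolding oplus_chain_def by (auto simp: numeral_2_eq_2 less_Suc_eq)
  moreover have "2 \<le> n - 2" using assms by simp
  ultimately show "height n l > 1" using height_bounds(4)[of n 2 l] assms by simp
qed

lemma oplus_chain_funpow:
  assumes "oplus_chain n l k" "1 \<le> m" "m \<le> k"
  shows "l ! 1 = (oplus n ^^ (m - 1)) (l ! m)"
  using assms(2,3)
proof (induction m rule: nat_induct_at_least)
  case base then show ?case by simp
next
  case (Suc m)
  then have "l ! m = oplus n (l ! Suc m)" using assms(1) unfolding oplus_chain_def by simp
  then show ?case using Suc by (cases m) (simp_all add: funpow_swap1)
qed

text \<open>With \<open>a = oplus n (l ! 1)\<close> the equation would make \<open>a\<close> a fixed point of the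
  \<open>(m + 1)\<close>-th iterate of \<open>\<oplus>\<close>, which is a cycle of length \<open>n - 1\<close>.\<close>
lemma oplus_chain_no_wrap:
  assumes "n \<ge> 3" "oplus_chain n l m" "2 \<le> m" "m + 1 < n - 1"
  shows "l ! m \<noteq> oplus n (oplus n (l ! 1))"
proof
  define a where "a = oplus n (l ! 1)"
  assume "l ! m = oplus n (oplus n (l ! 1))"
  then have "l ! 1 = (oplus n ^^ (m - 1)) (oplus n a)"
    using oplus_chain_funpow[OF assms(2), of m] assms(3) unfolding a_def by simp
  then have "a = oplus n ((oplus n ^^ (m - 1)) (oplus n a))" unfolding a_def by simp
  also have "\<dots> = (oplus n ^^ Suc (Suc (m - 1))) a" by (simp add: funpow_swap1)
  finally have "a = (oplus n ^^ (m + 1)) a" using assms(3) by (simp add: Suc_diff_le)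
  then show False using funpow_oplus_neq[of n a "m + 1"] oplus_bounds[of n] assms unfolding a_def by simp
qed

lemma seedD:
  assumes "seed n \<phi>" "n \<ge> 3"
  shows "length \<phi> = n - 1" "distinct \<phi>" "\<phi> ! 0 = n" "mis n \<phi> \<notin> set \<phi>"
    and "1 \<le> mis n \<phi>" "mis n \<phi> \<le> n - 1" "set \<phi> \<subseteq> {1..n}" "\<phi> \<noteq> []"
  using assms oplus_bounds[of n] unfolding seed_def mis_def by auto

lemma rotate_insert_at_in_perms:
  "p \<le> length \<phi> \<Longrightarrow> j < n \<Longrightarrow> rotate j (insert_at p (mis n \<phi>) \<phi>) \<in> perms n \<phi>"
  unfolding perms_def insert_at_def by blast

lemma insert_at_1_eq_tilde: "\<psi> \<noteq> [] \<Longrightarrow> insert_at 1 (mis n \<psi>) \<psi> = tilde n \<psi>"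
  by (cases \<psi>) (auto simp: insert_at_def tilde_def)

text \<open>Inserting at position 0 is a rotation of inserting at the end, so position 0 can be avoided.\<close>
lemma perms_normal_form:
  assumes "seed n \<phi>" "n \<ge> 3" "\<pi> \<in> perms n \<phi>"
  shows "\<exists>j<n. \<exists>p. 1 \<le> p \<and> p \<le> n - 1 \<and> \<pi> = rotate j (insert_at p (mis n \<phi>) \<phi>)"
proof -
  let ?x = "mis n \<phi>"
  have len: "length \<phi> = n - 1" using seedD[OF assms(1,2)] by simp
  obtain j p where jp: "j < n" "p \<le> length \<phi>" "\<pi> = rotate j (insert_at p ?x \<phi>)"
    using assms(3) unfolding perms_def insert_at_def by auto
  show ?thesis
  proof (cases "p = 0")
    case False then show ?thesis using jp len by (intro exI[of _ j] conjI exI[of _ p]) auto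
  next
    case True
    have "insert_at (n - 1) ?x \<phi> = \<phi> @ [?x]" unfolding insert_at_def using len by simp
    then have "rotate (n - 1) (insert_at (n - 1) ?x \<phi>) = ?x # \<phi>"
      using len rotate_append[of \<phi> "[?x]"] by simp
    moreover have "\<pi> = rotate j (?x # \<phi>)" using jp True unfolding insert_at_def by simp
    ultimately have "\<pi> = rotate (j + (n - 1)) (insert_at (n - 1) ?x \<phi>)"
      by (metis rotate_rotate)
    also have "\<dots> = rotate ((j + (n - 1)) mod n) (insert_at (n - 1) ?x \<phi>)"
      using length_insert_at[of "n - 1" ?x \<phi>] len assms(2) by (subst rotate_conv_mod) simp
    finally show ?thesis using assms(2) by (intro exI[of _ "(j + (n - 1)) mod n"] conjI exI[of _ "n - 1"]) auto
  qed
qed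

lemma shared_arrangement:
  assumes "n \<ge> 3" "seed n \<phi>" "seed n \<psi>" "\<pi> \<in> perms n \<phi>" "\<pi> \<in> perms n \<psi>"
  shows "\<exists>j p q. j < n \<and> 1 \<le> p \<and> p \<le> n - 1 \<and> 1 \<le> q \<and> q \<le> n - 1 \<and>
     insert_at p (mis n \<phi>) \<phi> = insert_at q (mis n \<psi>) \<psi> \<and> \<pi> = rotate j (insert_at p (mis n \<phi>) \<phi>)"
proof -
  obtain j p where p: "j < n" "1 \<le> p" "p \<le> n - 1" "\<pi> = rotate j (insert_at p (mis n \<phi>) \<phi>)"
    using perms_normal_form[OF assms(2,1,4)] by blast
  obtain j' q where q: "1 \<le> q" "q \<le> n - 1" "\<pi> = rotate j' (insert_at q (mis n \<psi>) \<psi>)"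
    using perms_normal_form[OF assms(3,1,5)] by blast
  note \<phi> = seedD[OF assms(2,1)] and \<psi> = seedD[OF assms(3,1)]
  have "insert_at p (mis n \<phi>) \<phi> = insert_at q (mis n \<psi>) \<psi>"
  proof (rule rotate_eq_rotate_same_head)
    show "distinct (insert_at p (mis n \<phi>) \<phi>)" using \<phi> distinct_insert_at by simp
    show "length (insert_at p (mis n \<phi>) \<phi>) = length (insert_at q (mis n \<psi>) \<psi>)"
      using \<phi> \<psi> p q by (simp add: length_insert_at)
    show "insert_at p (mis n \<phi>) \<phi> \<noteq> []" unfolding insert_at_def by simp
    show "insert_at p (mis n \<phi>) \<phi> ! 0 = insert_at q (mis n \<psi>) \<psi> ! 0"
      using \<phi> \<psi> p q by (simp add: nth_insert_at_less)
    show "rotate j (insert_at p (mis n \<phi>) \<phi>) = rotate j' (insert_at q (mis n \<psi>) \<psi>)"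
      using p(4) q(3) by simp
  qed
  then show ?thesis using p q(1,2) by blast
qed

lemma neighbors_shared_arrangement:
  assumes "n \<ge> 3" "neighbors n \<phi> \<psi>"
  obtains p q where "1 \<le> p" "p \<le> n - 1" "1 \<le> q" "q \<le> n - 1"
    "insert_at p (mis n \<phi>) \<phi> = insert_at q (mis n \<psi>) \<psi>"
  using assms shared_arrangement unfolding neighbors_def by blast

lemma shared_arrangement_at_1:
  assumes "insert_at p (mis n \<phi>) \<phi> = insert_at q (mis n \<psi>) \<psi>" "mis n \<phi> \<noteq> mis n \<psi>"
    and "1 \<le> p" "p \<le> length \<phi>" "1 \<le> q" "q \<le> length \<psi>"
  shows "p = 1 \<or> q = 1"
proof (rule ccontr)
  assume "\<not> (p = 1 \<or> q = 1)"
  then have "1 < p" "1 < q" using assms(3,5) by auto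
  then have "\<phi> ! 1 = \<psi> ! 1" using assms(1,4,6) nth_insert_at_less[of 1] by metis
  then show False using assms(2) unfolding mis_def by simp
qed

lemma tilde_eq_insert_at:
  assumes "n \<ge> 5" "seed n \<beta>" "seed n \<psi>" "mis n \<beta> \<noteq> mis n \<psi>"
    and "1 \<le> p" "p \<le> n - 1" "tilde n \<beta> = insert_at p (mis n \<psi>) \<psi>"
  shows "p \<ge> 3" "\<psi> ! 1 = mis n \<beta>" "\<psi> ! 2 = \<beta> ! 1"
    and "mis n \<psi> = oplus n (mis n \<beta>)" "height n \<psi> > 1"
proof -
  have "n \<ge> 3" using assms(1) by simp
  note \<beta> = seedD[OF assms(2) this] and \<psi> = seedD[OF assms(3) this]
  have tilde1: "tilde n \<beta> ! 1 = mis n \<beta>" and tilde2: "tilde n \<beta> ! 2 = \<beta> ! 1"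
    using \<beta> assms(1) by (auto simp: tilde_def hd_conv_nth nth_tl)
  have "p \<noteq> 1" using assms(4,7) tilde1 nth_insert_at_same[of 1 \<psi>] \<psi> assms(1) by auto
  then show \<psi>1: "\<psi> ! 1 = mis n \<beta>"
    using assms(5-7) tilde1 \<psi> nth_insert_at_less[of 1 p \<psi>] by auto
  then show mis_\<psi>: "mis n \<psi> = oplus n (mis n \<beta>)" unfolding mis_def by simp
  have "p \<noteq> 2"
  proof
    assume "p = 2"
    then have "\<beta> ! 1 = mis n \<psi>"
      using assms(7) tilde2 nth_insert_at_same[of 2 \<psi>] \<psi> assms(1) by simp
    then have "mis n \<beta> = oplus n (oplus n (mis n \<beta>))" using mis_\<psi> unfolding mis_def by simp
    then show False using oplus_oplus_neq[of n "mis n \<beta>"] \<beta> assms(1) by simp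
  qed
  then show "p \<ge> 3" using \<open>p \<noteq> 1\<close> assms(5) by simp
  then show \<psi>2: "\<psi> ! 2 = \<beta> ! 1"
    using assms(6,7) tilde2 \<psi> nth_insert_at_less[of 2 p \<psi>] by auto
  have "\<psi> ! 1 = oplus n (\<psi> ! 2)" using \<psi>1 \<psi>2 unfolding mis_def by simp
  then show "height n \<psi> > 1" using height_gt_1_iff assms(1) by simp
qed

lemma neighbors_imp_parent:
  assumes "n \<ge> 5" "\<phi> \<noteq> \<psi>" "neighbors n \<phi> \<psi>"
  shows "is_parent n \<phi> \<psi> \<or> is_parent n \<psi> \<phi>"
proof -
  have seeds: "seed n \<phi>" "seed n \<psi>" using assms(3) unfolding neighbors_def by auto
  have "n \<ge> 3" using assms(1) by simp
  note \<phi> = seedD[OF seeds(1) this] and \<psi> = seedD[OF seeds(2) this]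
  obtain p q where pq: "1 \<le> p" "p \<le> n - 1" "1 \<le> q" "q \<le> n - 1"
    and eq: "insert_at p (mis n \<phi>) \<phi> = insert_at q (mis n \<psi>) \<psi>"
    by (rule neighbors_shared_arrangement[OF \<open>n \<ge> 3\<close> assms(3)])
  have mis_neq: "mis n \<phi> \<noteq> mis n \<psi>"
    using insert_at_eq_insert_atD[of p "mis n \<phi>" \<phi> q \<psi>] eq \<phi>(4) \<psi>(4) assms(2) by metis
  have "p = 1 \<or> q = 1" using shared_arrangement_at_1[OF eq mis_neq] pq \<phi>(1) \<psi>(1) by simp
  then show ?thesis
  proof
    assume "p = 1"
    then have "tilde n \<phi> = insert_at q (mis n \<psi>) \<psi>" using eq insert_at_1_eq_tilde \<phi>(8) by metis
    note child = tilde_eq_insert_at[OF assms(1) seeds mis_neq pq(3,4) this]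
    have "is_parent n \<psi> \<phi>" unfolding is_parent_def using assms child(4,5) by simp
    then show ?thesis ..
  next
    assume "q = 1"
    then have "tilde n \<psi> = insert_at p (mis n \<phi>) \<phi>" using eq insert_at_1_eq_tilde \<psi>(8) by metis
    note child = tilde_eq_insert_at[OF assms(1) seeds(2,1) mis_neq[symmetric] pq(1,2) this]
    have "is_parent n \<phi> \<psi>"
      unfolding is_parent_def using assms child(4,5) by (simp add: neighbors_def Int_commute)
    then show ?thesis ..
  qed
qed

lemma neighbors_commute: "neighbors n \<phi> \<psi> \<longleftrightarrow> neighbors n \<psi> \<phi>"
  unfolding neighbors_def by blast

lemma parent_shared_arrangementD:
  assumes "n \<ge> 5" "is_parent n \<phi> \<psi>" "1 \<le> p" "p \<le> n - 1" "1 \<le> q" "q \<le> n - 1"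
    and eq: "insert_at p (mis n \<phi>) \<phi> = insert_at q (mis n \<psi>) \<psi>"
  shows "q = 1" "p \<ge> 3"
proof -
  have seeds: "seed n \<phi>" "seed n \<psi>" and mis_\<phi>: "mis n \<phi> = oplus n (mis n \<psi>)"
    using assms(2) unfolding is_parent_def neighbors_def by simp_all
  have "n \<ge> 3" using assms(1) by simp
  note \<phi> = seedD[OF seeds(1) this] and \<psi> = seedD[OF seeds(2) this]
  have mis_neq: "mis n \<phi> \<noteq> mis n \<psi>" using mis_\<phi> oplus_neq \<psi>(5,6) \<open>n \<ge> 3\<close> by simp
  have "p \<noteq> 1"
  proof
    assume "p = 1"
    then have "tilde n \<phi> = insert_at q (mis n \<psi>) \<psi>" using eq insert_at_1_eq_tilde \<phi>(8) by metis
    then have "mis n \<psi> = oplus n (oplus n (mis n \<psi>))"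
      using tilde_eq_insert_at(4)[OF assms(1) seeds mis_neq assms(5,6)] mis_\<phi> by simp
    then show False using oplus_oplus_neq[of n "mis n \<psi>"] \<psi>(5,6) assms(1) by simp
  qed
  then show "q = 1" using shared_arrangement_at_1[OF eq mis_neq] assms(3-6) \<phi>(1) \<psi>(1) by simp
  then have "tilde n \<psi> = insert_at p (mis n \<phi>) \<phi>" using eq insert_at_1_eq_tilde \<psi>(8) by metis
  then show "p \<ge> 3" using tilde_eq_insert_at(1)[OF assms(1) seeds(2,1) mis_neq[symmetric] assms(3,4)] by simp
qed

lemma parent_arrangement:
  assumes "n \<ge> 5" "is_parent n \<phi> \<psi>"
  obtains p where "3 \<le> p" "p \<le> n - 1" "insert_at p (mis n \<phi>) \<phi> = tilde n \<psi>"
proof -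
  have "neighbors n \<phi> \<psi>" "seed n \<psi>"
    using assms(2) neighbors_commute unfolding is_parent_def neighbors_def by auto
  moreover have "n \<ge> 3" using assms(1) by simp
  ultimately obtain p q where pq: "1 \<le> p" "p \<le> n - 1" "1 \<le> q" "q \<le> n - 1"
    and eq: "insert_at p (mis n \<phi>) \<phi> = insert_at q (mis n \<psi>) \<psi>"
    using neighbors_shared_arrangement by metis
  note shared = parent_shared_arrangementD[OF assms pq eq]
  then show ?thesis
    using that pq(2) eq insert_at_1_eq_tilde seedD(8)[OF \<open>seed n \<psi>\<close> \<open>n \<ge> 3\<close>] by metis
qed

lemma nth_tilde_Suc: "1 \<le> m \<Longrightarrow> m < length \<psi> \<Longrightarrow> tilde n \<psi> ! Suc m = \<psi> ! m"
  unfolding tilde_def by (cases \<psi>; cases m) auto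

lemma length_tilde: "\<psi> \<noteq> [] \<Longrightarrow> length (tilde n \<psi>) = Suc (length \<psi>)"
  unfolding tilde_def by simp

lemma parent_perms_inter:
  assumes "n \<ge> 5" "is_parent n \<phi> \<psi>"
  shows "perms n \<phi> \<inter> perms n \<psi> = cycle (tilde n \<psi>)"
proof
  have seeds: "seed n \<phi>" "seed n \<psi>" using assms(2) unfolding is_parent_def neighbors_def by auto
  have "n \<ge> 3" using assms(1) by simp
  note \<phi> = seedD[OF seeds(1) this] and \<psi> = seedD[OF seeds(2) this]
  have len: "length (tilde n \<psi>) = n" using length_tilde \<psi>(1,8) assms(1) by simp
  show "perms n \<phi> \<inter> perms n \<psi> \<subseteq> cycle (tilde n \<psi>)"
  proof
    fix \<pi> assume "\<pi> \<in> perms n \<phi> \<inter> perms n \<psi>"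
    then obtain j p q where "j < n" "1 \<le> p" "p \<le> n - 1" "1 \<le> q" "q \<le> n - 1"
      and eq: "insert_at p (mis n \<phi>) \<phi> = insert_at q (mis n \<psi>) \<psi>"
      and \<pi>: "\<pi> = rotate j (insert_at p (mis n \<phi>) \<phi>)"
      using shared_arrangement[OF \<open>n \<ge> 3\<close> seeds] by blast
    then have "q = 1" using parent_shared_arrangementD[OF assms] by blast
    then have "\<pi> = rotate j (tilde n \<psi>)" using \<pi> eq insert_at_1_eq_tilde \<psi>(8) by metis
    then show "\<pi> \<in> cycle (tilde n \<psi>)" unfolding cycle_def using \<open>j < n\<close> len by auto
  qed
  show "cycle (tilde n \<psi>) \<subseteq> perms n \<phi> \<inter> perms n \<psi>"
  proof
    fix \<pi> assume "\<pi> \<in> cycle (tilde n \<psi>)"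
    then obtain j where "j < n" and \<pi>: "\<pi> = rotate j (tilde n \<psi>)" unfolding cycle_def using len by auto
    obtain p where "p \<le> n - 1" and eq: "insert_at p (mis n \<phi>) \<phi> = tilde n \<psi>"
      using parent_arrangement[OF assms] .
    have "rotate j (insert_at p (mis n \<phi>) \<phi>) \<in> perms n \<phi>"
      using rotate_insert_at_in_perms \<open>j < n\<close> \<open>p \<le> n - 1\<close> \<phi>(1) by simp
    moreover have "rotate j (insert_at 1 (mis n \<psi>) \<psi>) \<in> perms n \<psi>"
      using rotate_insert_at_in_perms \<open>j < n\<close> \<psi>(1) assms(1) by simp
    ultimately show "\<pi> \<in> perms n \<phi> \<inter> perms n \<psi>"
      using \<pi> eq insert_at_1_eq_tilde \<psi>(8) by simp
  qed
qed

lemma rotate_supi: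
  assumes "length \<phi> = n - 1" "1 \<le> i" "i \<le> n - 1"
  shows "rotate i (supi n \<phi> i) = insert_at (n - i) (mis n \<phi>) \<phi>"
proof -
  let ?x = "mis n \<phi>" and ?q = "n - i"
  have "rotate (length \<phi> - (i - 1)) \<phi> = drop ?q \<phi> @ take ?q \<phi>"
  proof (cases "i = 1")
    case True then show ?thesis using assms by simp
  next
    case False then show ?thesis using assms by (simp add: rotate_drop_take)
  qed
  then have "rotate i (supi n \<phi> i) = rotate (i - 1) (drop ?q \<phi> @ take ?q \<phi> @ [?x])"
    unfolding supi_def using rotate_rotate[of "i - 1" 1 "?x # drop ?q \<phi> @ take ?q \<phi>"] assms(2)
    by simp
  also have "\<dots> = rotate (length (drop ?q \<phi>)) (drop ?q \<phi> @ take ?q \<phi> @ [?x])"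
    using assms by simp
  also have "\<dots> = insert_at ?q ?x \<phi>"
    unfolding insert_at_def by (subst rotate_append) simp
  finally show ?thesis .
qed

lemma nth_tilde_eq_insert_at:
  assumes "length \<psi> = length \<phi>" "p \<le> length \<phi>" "insert_at p x \<phi> = tilde n \<psi>"
  shows "1 \<le> m \<Longrightarrow> Suc m < p \<Longrightarrow> \<psi> ! m = \<phi> ! Suc m"
    and "1 < p \<Longrightarrow> \<psi> ! (p - 1) = x"
proof -
  assume "1 \<le> m" "Suc m < p"
  then have "tilde n \<psi> ! Suc m = \<psi> ! m" using nth_tilde_Suc assms(1,2) by simp
  then show "\<psi> ! m = \<phi> ! Suc m"
    using assms(3) nth_insert_at_less[of "Suc m" p \<phi> x] \<open>Suc m < p\<close> assms(2) by simp
next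
  assume "1 < p"
  then have "tilde n \<psi> ! p = \<psi> ! (p - 1)" using nth_tilde_Suc[of "p - 1" \<psi>] assms(1,2) by simp
  then show "\<psi> ! (p - 1) = x" using assms(3) nth_insert_at_same[of p \<phi> x] assms(2) by simp
qed

lemma height_son:
  assumes "n \<ge> 5" "seed n \<phi>" "length \<psi> = n - 1" "3 \<le> p" "p \<le> n - 1"
    and eq: "insert_at p (mis n \<phi>) \<phi> = tilde n \<psi>"
    and "1 < height n \<phi>" "height n \<phi> < n - 3"
  shows "height n \<psi> = min (height n \<phi> - 1) (p - 2)"
proof -
  have "n \<ge> 3" using assms(1) by simp
  note \<phi> = seedD[OF assms(2) this]
  define k where "k = height n \<phi>"
  define h where "h = min (k - 1) (p - 2)"
  have chain: "oplus_chain n \<phi> k" unfolding k_def using height_bounds(3)[OF \<open>n \<ge> 3\<close>] .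
  have "length \<psi> = length \<phi>" "p \<le> length \<phi>" using assms(3,5) \<phi>(1) by simp_all
  note shift = nth_tilde_eq_insert_at(1)[OF this eq]
  have at_p: "\<psi> ! (p - 1) = mis n \<phi>"
    using nth_tilde_eq_insert_at(2)[OF \<open>length \<psi> = length \<phi>\<close> \<open>p \<le> length \<phi>\<close> eq] assms(4) by simp
  have "oplus_chain n \<psi> h"
    unfolding oplus_chain_def
  proof (intro allI impI)
    fix j assume "1 \<le> j \<and> j < h"
    then have "\<psi> ! j = \<phi> ! Suc j" "\<psi> ! Suc j = \<phi> ! Suc (Suc j)" "Suc j < k"
      using shift unfolding h_def by auto
    then show "\<psi> ! j = oplus n (\<psi> ! Suc j)" using chain \<open>1 \<le> j \<and> j < h\<close> unfolding oplus_chain_def by simp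
  qed
  moreover have "\<psi> ! h \<noteq> oplus n (\<psi> ! Suc h)"
  proof (cases "k \<le> p - 2")
    case True
    then have "h = k - 1" "Suc h = k" using assms(7) unfolding h_def k_def by auto
    moreover have "1 \<le> h" "Suc (Suc h) < p" using True assms(4,7) \<open>h = k - 1\<close> unfolding k_def by auto
    ultimately have "\<psi> ! h = \<phi> ! k" "\<psi> ! Suc h = \<phi> ! Suc k"
      using shift[of h] shift[of "Suc h"] by simp_all
    then show ?thesis using height_maximal[OF \<open>n \<ge> 3\<close>, of \<phi>] assms(8) unfolding k_def by simp
  next
    case False
    then have "h = p - 2" "Suc h = p - 1" using assms(4) unfolding h_def by auto
    then have "\<psi> ! h = \<phi> ! (p - 1)" "\<psi> ! Suc h = mis n \<phi>"
      using shift[of "p - 2"] at_p assms(4) by (simp_all add: Suc_diff_Suc numeral_2_eq_2)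
    moreover have "\<phi> ! (p - 1) \<noteq> oplus n (oplus n (\<phi> ! 1))"
      using oplus_chain_no_wrap[OF \<open>n \<ge> 3\<close> oplus_chain_mono[OF chain]] False assms(4,8)
      unfolding k_def by simp
    ultimately show ?thesis unfolding mis_def by simp
  qed
  moreover have "1 \<le> h" "h \<le> n - 2" using assms(4,5,7) unfolding h_def k_def by auto
  ultimately have "height n \<psi> = h" using height_eqI[OF \<open>n \<ge> 3\<close>] by blast
  then show ?thesis unfolding h_def k_def .
qed

lemma parent_is_son:
  assumes "n \<ge> 5" "is_parent n \<phi> \<psi>"
  shows "\<exists>i\<in>{1..n-3}. is_son n \<phi> i \<psi>
           \<and> (height n \<phi> < n - 3 \<longrightarrow> height n \<psi> = Delta n (height n \<phi>) i)"
proof -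
  obtain p where p: "3 \<le> p" "p \<le> n - 1" and eq: "insert_at p (mis n \<phi>) \<phi> = tilde n \<psi>"
    using parent_arrangement[OF assms] .
  have seeds: "seed n \<phi>" "seed n \<psi>" and "1 < height n \<phi>"
    using assms(2) unfolding is_parent_def neighbors_def by auto
  have "n \<ge> 3" using assms(1) by simp
  note \<phi> = seedD[OF seeds(1) this] and \<psi> = seedD[OF seeds(2) this]
  have "rotate (n - p) (supi n \<phi> (n - p)) = tilde n \<psi>"
    using rotate_supi[OF \<phi>(1), of "n - p"] p eq by simp
  then have "is_son n \<phi> (n - p) \<psi>" using assms(2) unfolding is_son_def by simp
  moreover have "n - 2 - (n - p) = p - 2" using p by simp
  then have "height n \<phi> < n - 3 \<Longrightarrow> height n \<psi> = Delta n (height n \<phi>) (n - p)"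
    using height_son[OF assms(1) seeds(1) \<psi>(1) p eq \<open>1 < height n \<phi>\<close>] p unfolding Delta_def by simp
  moreover have "n - p \<in> {1..n-3}" using p by auto
  ultimately show ?thesis by blast
qed

text \<open>The son is read off \<open>insert_at (n - i) (mis \<phi>) \<phi>\<close> by deleting its entry 1.\<close>
lemma son_exists:
  assumes "n \<ge> 5" "seed n \<phi>" "1 < height n \<phi>" "1 \<le> i" "i \<le> n - 3"
  shows "\<exists>\<beta>. seed n \<beta> \<and> is_son n \<phi> i \<beta>"
proof -
  have "n \<ge> 3" using assms(1) by simp
  note \<phi> = seedD[OF assms(2) this]
  define p where "p = n - i"
  have p: "3 \<le> p" "p \<le> n - 1" using assms(4,5) unfolding p_def by auto
  define C where "C = insert_at p (mis n \<phi>) \<phi>"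
  define r where "r = drop 2 C"
  define \<beta> where "\<beta> = n # r"
  have "length C = n" unfolding C_def using length_insert_at[of p "mis n \<phi>" \<phi>] \<phi>(1) p assms(1) by simp
  moreover have "C ! 0 = n" "C ! 1 = \<phi> ! 1" and C2: "C ! 2 = \<phi> ! 2"
    unfolding C_def using p by (simp_all add: nth_insert_at_less \<phi>(1,3))
  ultimately have C: "C = n # \<phi> ! 1 # r"
    unfolding r_def using assms(1) Cons_nth_drop_Suc[of 0 C] Cons_nth_drop_Suc[of 1 C]
    by (simp add: numeral_2_eq_2)
  have "distinct C" unfolding C_def by (rule distinct_insert_at[OF \<phi>(2,4)])
  then have r: "n \<notin> set r" "\<phi> ! 1 \<notin> set r" "distinct r" "\<phi> ! 1 \<noteq> n" by (subst (asm) C; simp)+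
  have "set C \<subseteq> {1..n}" unfolding C_def set_insert_at using \<phi>(5-7) by auto
  then have "set \<beta> \<subseteq> {1..n}" using assms(1) unfolding \<beta>_def by (subst (asm) C) auto
  have \<beta>1: "\<beta> ! 1 = \<phi> ! 2" unfolding \<beta>_def r_def using C2 \<open>length C = n\<close> assms(1) by simp
  have mis_\<beta>: "mis n \<beta> = \<phi> ! 1" unfolding mis_def \<beta>1 using height_gt_1_iff assms(1,3) by simp
  have "seed n \<beta>"
    unfolding seed_def mis_def[symmetric] mis_\<beta>
    using \<open>set \<beta> \<subseteq> {1..n}\<close> \<open>length C = n\<close> r assms(1) unfolding \<beta>_def r_def by auto
  have tilde_\<beta>: "tilde n \<beta> = C" unfolding tilde_def mis_\<beta> using C unfolding \<beta>_def by simp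
  have "rotate i (supi n \<phi> i) = tilde n \<beta>"
    using rotate_supi[OF \<phi>(1), of i] tilde_\<beta> assms(4,5) unfolding C_def p_def by simp
  moreover have "neighbors n \<beta> \<phi>"
  proof -
    have "C \<in> perms n \<phi>" using rotate_insert_at_in_perms[of p \<phi> 0 n] p \<phi>(1) assms(1) unfolding C_def by simp
    moreover have "C \<in> perms n \<beta>"
      using rotate_insert_at_in_perms[of 1 \<beta> 0 n] insert_at_1_eq_tilde[of \<beta> n] tilde_\<beta> assms(1)
      unfolding \<beta>_def by simp
    ultimately show ?thesis unfolding neighbors_def using \<open>seed n \<beta>\<close> assms(2) by auto
  qed
  moreover have "\<phi> \<noteq> \<beta>"
  proof -
    have "\<phi> ! 1 \<in> set \<phi>" using \<phi>(1) assms(1) by simp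
    then show ?thesis using r(2,4) unfolding \<beta>_def by auto
  qed
  ultimately have "is_son n \<phi> i \<beta>"
    unfolding is_son_def is_parent_def using assms(3) mis_\<beta> by (simp add: mis_def)
  then show ?thesis using \<open>seed n \<beta>\<close> by blast
qed

theorem mainTheorem3:
  fixes n :: nat
  assumes "n \<ge> 5"
  shows "(\<forall>\<phi> \<psi>. seed n \<phi> \<and> seed n \<psi> \<and> \<phi> \<noteq> \<psi> \<longrightarrow>
            (neighbors n \<phi> \<psi> \<longleftrightarrow> is_parent n \<phi> \<psi> \<or> is_parent n \<psi> \<phi>))
       \<and> (\<forall>\<phi> \<psi>. is_parent n \<phi> \<psi> \<longrightarrow>
            perms n \<phi> \<inter> perms n \<psi> = cycle (tilde n \<psi>)
            \<and> (\<exists>i\<in>{1..n-3}. is_son n \<phi> i \<psi>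
                 \<and> (height n \<phi> < n - 3 \<longrightarrow> height n \<psi> = Delta n (height n \<phi>) i)))
       \<and> (\<forall>\<phi> i. seed n \<phi> \<and> height n \<phi> > 1 \<and> i \<in> {1..n-3} \<longrightarrow>
            (\<exists>\<beta>. seed n \<beta> \<and> is_son n \<phi> i \<beta>))"
proof (intro conjI allI impI)
  fix \<phi> \<psi> assume "seed n \<phi> \<and> seed n \<psi> \<and> \<phi> \<noteq> \<psi>"
  then show "neighbors n \<phi> \<psi> \<longleftrightarrow> is_parent n \<phi> \<psi> \<or> is_parent n \<psi> \<phi>"
    using neighbors_imp_parent[OF assms] neighbors_commute unfolding is_parent_def by blast
next
  fix \<phi> \<psi> assume "is_parent n \<phi> \<psi>"
  then show "perms n \<phi> \<inter> perms n \<psi> = cycle (tilde n \<psi>)"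
    and "\<exists>i\<in>{1..n-3}. is_son n \<phi> i \<psi>
           \<and> (height n \<phi> < n - 3 \<longrightarrow> height n \<psi> = Delta n (height n \<phi>) i)"
    using parent_perms_inter[OF assms] parent_is_son[OF assms] by blast+
next
  fix \<phi> i assume "seed n \<phi> \<and> height n \<phi> > 1 \<and> i \<in> {1..n-3}"
  then show "\<exists>\<beta>. seed n \<beta> \<and> is_son n \<phi> i \<beta>" using son_exists[OF assms] by auto
qed

end
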